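(* There exist absolute constants $C,c>0$ such that for every integer $v\ge0$ and real $\lambda\ge\frac12$: \begin{enumerate} \item if $v\ge\lambda$, then $c(v+\lambda)^{-1}\exp(\Psi_{v,\lambda})\le E_{v,\lambda}\le C(v+\lambda)\exp(\Psi_{v,\lambda})$; \item if $v\le\lambda$, then $c(v+\lambda)^{-1}\exp(\Psi_{v,\lambda})\le E_{v,\lambda}\le C\lambda^{-1/2}\exp(\Psi_{v,\lambda})$. \end{enumerate}
   Context: For integer $v\ge0$ and real $\lambda>0$ define $E_{v,\lambda}=\sum_{n\ge v,\ n-v\in2\mathbb{Z}}\frac{\lambda^n}{2^n n!}\binom{n}{(n-v)/2}$ and $\Psi_{v,\lambda}=\sqrt{v^2+\lambda^2}+v\log\Big(\frac{\sqrt{v^2+\lambda^2}-v}{\lambda}\Big)$ (natural logarithm). *)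

theory Defs
  imports "HOL-Analysis.Analysis"
begin

definition E_fun :: "nat \<Rightarrow> real \<Rightarrow> real" where
  "E_fun v lam = (\<Sum>n. if v \<le> n \<and> even (n - v)
      then lam ^ n / (2 ^ n * fact n) * real (n choose ((n - v) div 2)) else 0)"

definition Psi :: "nat \<Rightarrow> real \<Rightarrow> real" where
  "Psi v lam = sqrt (real v ^ 2 + lam ^ 2)
     + real v * ln ((sqrt (real v ^ 2 + lam ^ 2) - real v) / lam)"

end

theory Submission
  imports Defs
begin

text \<open>
  E_{v,lambda} is the modified Bessel function I_v(lambda) = sum_k (lambda/2)^(v+2k) / (k! (v+k)!).
  Whenever a b = (lambda/2)^2 its terms factor as e^(a+b) (lambda/2a)^v p_a(v+k) p_b(k), with
  Poisson weights p_t(j) = t^j e^(-t) / j!, so E_{v,lambda} = e^(a+b) (lambda/2a)^v P(X - Y = v)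
  for independent X ~ Poisson(a), Y ~ Poisson(b). Taking a, b = (s +- v)/2 with
  s = sqrt(v^2 + lambda^2) centres X - Y at v and makes the prefactor exactly exp Psi_{v,lambda}.
  The probability is at most 1 and at most max_j p_a(j) <= 2/sqrt a <= 4/sqrt lambda; it is at
  least the product of the two Poisson weights at their modes, which elementary Stirling bounds
  show to be at least e^(-4) / sqrt((a+1)(b+1)) >= e^(-4) / (5 (v + lambda)).
\<close>

lemma ln_add_one_lower_bound:
  fixes x :: real assumes "x \<ge> 0"
  shows "2 * x / (2 + x) \<le> ln (1 + x)"
proof -
  let ?f = "\<lambda>y::real. ln (1 + y) - 2 * y / (2 + y)"
  have "?f 0 \<le> ?f x"
  proof (rule DERIV_nonneg_imp_nondecreasing[OF assms])
    fix y :: real assume y: "0 \<le> y" "y \<le> x"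
    have "DERIV ?f y :> 1 / (1 + y) - (2 * (2 + y) - 2 * y) / (2 + y)^2"
      using y by (auto intro!: derivative_eq_intros simp: power2_eq_square)
    moreover have "1 / (1 + y) - (2 * (2 + y) - 2 * y) / (2 + y)^2 = y^2 / ((1 + y) * (2 + y)^2)"
      using y by (simp add: divide_simps power2_eq_square) algebra
    ultimately show "\<exists>z. DERIV ?f y :> z \<and> z \<ge> 0"
      using y by auto
  qed
  then show ?thesis by simp
qed

lemma ln_add_one_upper_bound:
  fixes x :: real assumes "x \<ge> 0"
  shows "ln (1 + x) \<le> x * (2 + x) / (2 + 2 * x)"
proof -
  let ?f = "\<lambda>y::real. y * (2 + y) / (2 + 2 * y) - ln (1 + y)"
  have "?f 0 \<le> ?f x"
  proof (rule DERIV_nonneg_imp_nondecreasing[OF assms])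
    fix y :: real assume y: "0 \<le> y" "y \<le> x"
    have "DERIV ?f y :> ((2 + 2 * y) * (2 + 2 * y) - y * (2 + y) * 2) / (2 + 2 * y)^2 - 1 / (1 + y)"
      using y by (auto intro!: derivative_eq_intros simp: power2_eq_square)
    moreover have "((2 + 2 * y) * (2 + 2 * y) - y * (2 + y) * 2) / (2 + 2 * y)^2 - 1 / (1 + y)
        = y^2 / (2 * (1 + y)^2)"
      using y by (simp add: divide_simps power2_eq_square) algebra
    ultimately show "\<exists>z. DERIV ?f y :> z \<and> z \<ge> 0"
      by auto
  qed
  then show ?thesis by simp
qed

lemma ln_one_plus_inverse_bounds:
  fixes x :: real assumes "x > 0"
  shows "1 \<le> (x + 1/2) * ln (1 + 1/x)"
    and "(x + 1/2) * ln (1 + 1/x) \<le> 1 + 1 / (4 * x) - 1 / (4 * (x + 1))"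
proof -
  have "1 = (x + 1/2) * (2 * (1/x) / (2 + 1/x))"
    using assms by (simp add: field_simps)
  also have "\<dots> \<le> (x + 1/2) * ln (1 + 1/x)"
    using assms by (intro mult_left_mono ln_add_one_lower_bound) simp_all
  finally show "1 \<le> (x + 1/2) * ln (1 + 1/x)" .
  have "(x + 1/2) * ln (1 + 1/x) \<le> (x + 1/2) * ((1/x) * (2 + 1/x) / (2 + 2 * (1/x)))"
    using assms by (intro mult_left_mono ln_add_one_upper_bound) simp_all
  also have "\<dots> = 1 + 1 / (4 * x) - 1 / (4 * (x + 1))"
    using assms by (simp add: divide_simps) algebra
  finally show "(x + 1/2) * ln (1 + 1/x) \<le> 1 + 1 / (4 * x) - 1 / (4 * (x + 1))" .
qed

lemma ln_Suc_eq: "ln (real (Suc n)) = ln (real n) + ln (1 + 1 / real n)" if "n \<ge> 1"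
proof -
  have "1 + 1 / real n = real (Suc n) / real n"
    using that by (simp add: field_simps)
  then show ?thesis
    using that by (simp add: ln_div)
qed

lemma ln_fact_upper_bound:
  "n \<ge> 1 \<Longrightarrow> ln (fact n :: real) \<le> 1 + ln (real n) / 2 + real n * ln (real n) - real n"
proof (induction n rule: nat_induct_at_least)
  case (Suc n)
  define L where "L = ln (1 + 1 / real n)"
  have "1 \<le> (real n + 1/2) * L"
    unfolding L_def using Suc.hyps by (intro ln_one_plus_inverse_bounds) simp
  moreover have "ln (real (Suc n)) = ln (real n) + L"
    unfolding L_def using Suc.hyps by (rule ln_Suc_eq)
  moreover have "ln (fact (Suc n) :: real) = ln (real (Suc n)) + ln (fact n)"
    by (simp add: ln_mult)
  ultimately show ?case
    using Suc.IH by (simp add: algebra_simps add_divide_distrib)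
qed simp

text \<open>The telescoping term 1/(4n) is what makes the lower bound inductive.\<close>

lemma ln_fact_lower_bound:
  "n \<ge> 1 \<Longrightarrow> 3/4 + 1 / (4 * real n) + ln (real n) / 2 + real n * ln (real n) - real n
     \<le> ln (fact n :: real)"
proof (induction n rule: nat_induct_at_least)
  case (Suc n)
  define L where "L = ln (1 + 1 / real n)"
  have "(real n + 1/2) * L \<le> 1 + 1 / (4 * real n) - 1 / (4 * (real n + 1))"
    unfolding L_def using Suc.hyps by (intro ln_one_plus_inverse_bounds) simp
  moreover have "ln (real (Suc n)) = ln (real n) + L"
    unfolding L_def using Suc.hyps by (rule ln_Suc_eq)
  moreover have "ln (fact (Suc n) :: real) = ln (real (Suc n)) + ln (fact n)"
    by (simp add: ln_mult)
  ultimately show ?case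
    using Suc.IH by (simp add: algebra_simps add_divide_distrib)
qed simp

lemma exp_stirling_approx:
  assumes "n \<ge> 1"
  shows "exp (ln (real n) / 2 + real n * ln (real n) - real n)
     = sqrt (real n) * real n ^ n * exp (- real n)"
proof -
  have sqrt: "exp (ln (real n) / 2) = sqrt (real n)"
    using assms by (simp add: powr_half_sqrt[symmetric] powr_def)
  have pow: "exp (real n * ln (real n)) = real n ^ n"
    using assms by (simp add: exp_of_nat_mult)
  show ?thesis
    unfolding exp_diff exp_add sqrt pow by (simp add: exp_minus divide_inverse)
qed

lemma fact_le_stirling:
  assumes "n \<ge> 1" shows "fact n \<le> exp 1 * sqrt (real n) * real n ^ n * exp (- real n)"
proof -
  have "(fact n :: real) = exp (ln (fact n))"
    by simp
  also have "\<dots> \<le> exp (1 + (ln (real n) / 2 + real n * ln (real n) - real n))"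
    using ln_fact_upper_bound[OF assms] by (intro exp_mono) linarith
  finally show ?thesis
    using exp_stirling_approx[OF assms] by (simp add: exp_add)
qed

lemma stirling_le_fact:
  assumes "n \<ge> 1" shows "sqrt (real n) * real n ^ n * exp (- real n) \<le> fact n"
proof -
  have "sqrt (real n) * real n ^ n * exp (- real n)
      = exp (ln (real n) / 2 + real n * ln (real n) - real n)"
    using exp_stirling_approx[OF assms] by simp
  also have "\<dots> \<le> exp (ln (fact n))"
  proof (intro exp_mono)
    have "0 \<le> 3/4 + 1 / (4 * real n)"
      by simp
    then show "ln (real n) / 2 + real n * ln (real n) - real n \<le> ln (fact n)"
      using ln_fact_lower_bound[OF assms] by linarith
  qed
  finally show ?thesis
    by simp
qed

definition poisson_weight :: "real \<Rightarrow> nat \<Rightarrow> real" where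
  "poisson_weight t j = t ^ j * exp (- t) / fact j"

lemma poisson_weight_nonneg: "t \<ge> 0 \<Longrightarrow> poisson_weight t j \<ge> 0"
  by (simp add: poisson_weight_def)

lemma poisson_weight_Suc: "poisson_weight t (Suc j) = poisson_weight t j * (t / real (Suc j))"
  by (simp add: poisson_weight_def field_simps)

lemma poisson_weight_sums: "poisson_weight t sums 1"
proof -
  have "(\<lambda>j. t ^ j /\<^sub>R fact j * exp (- t)) sums (exp t * exp (- t))"
    by (rule sums_mult2[OF exp_converges])
  moreover have "(\<lambda>j. t ^ j /\<^sub>R fact j * exp (- t)) = poisson_weight t"
    by (auto simp: poisson_weight_def fun_eq_iff field_simps)
  ultimately show ?thesis
    by (simp add: exp_minus)
qed

lemma summable_poisson_weight: "summable (poisson_weight t)"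
  using poisson_weight_sums by (rule sums_summable)

lemma poisson_weight_le_1: "t \<ge> 0 \<Longrightarrow> poisson_weight t j \<le> 1"
  using sum_le_suminf[OF summable_poisson_weight, of "{j}"]
  by (simp add: poisson_weight_nonneg sums_unique[OF poisson_weight_sums, symmetric])

lemma poisson_weight_mono:
  assumes "i \<le> j" "real j \<le> t"
  shows "poisson_weight t i \<le> poisson_weight t j"
  using assms(1)
proof (induction j rule: dec_induct)
  case (step k)
  have "1 \<le> t / real (Suc k)"
    using step.hyps assms(2) by simp
  then have "poisson_weight t k \<le> poisson_weight t (Suc k)"
    unfolding poisson_weight_Suc
    using mult_left_mono[of 1] poisson_weight_nonneg[of t k] assms(2) by fastforce
  with step.IH show ?case
    by simp
qed simp

lemma poisson_weight_antimono:
  assumes "i \<le> j" "t \<le> real i + 1" "t \<ge> 0"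
  shows "poisson_weight t j \<le> poisson_weight t i"
  using assms(1)
proof (induction j rule: dec_induct)
  case (step k)
  have "t / real (Suc k) \<le> 1"
    using step.hyps assms(2) by simp
  then have "poisson_weight t (Suc k) \<le> poisson_weight t k"
    unfolding poisson_weight_Suc
    using mult_left_mono[of _ 1] poisson_weight_nonneg[of t k] assms(3) by fastforce
  with step.IH show ?case
    by simp
qed simp

lemma poisson_weight_le_mode:
  assumes "t \<ge> 0" shows "poisson_weight t j \<le> poisson_weight t (nat \<lfloor>t\<rfloor>)"
proof (cases "j \<le> nat \<lfloor>t\<rfloor>")
  case True
  then show ?thesis
    using assms by (intro poisson_weight_mono) linarith+
next
  case False
  then show ?thesis
    using assms by (intro poisson_weight_antimono) linarith+
qed

lemma power_mult_exp_le:
  assumes "t > 0" "m > 0"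
  shows "t ^ m * exp (- t) \<le> real m ^ m * exp (- real m)"
proof -
  have "real m * ln (t / real m) \<le> real m * (t / real m - 1)"
    using assms by (intro mult_left_mono ln_le_minus_one) simp_all
  then have "real m * ln t - t \<le> real m * ln (real m) - real m"
    using assms by (simp add: ln_div right_diff_distrib)
  then have "exp (real m * ln t - t) \<le> exp (real m * ln (real m) - real m)"
    by simp
  then show ?thesis
    using assms by (simp add: exp_diff exp_of_nat_mult exp_minus divide_inverse)
qed

lemma poisson_weight_le_sqrt:
  assumes "t > 0" shows "poisson_weight t j \<le> 2 / sqrt t"
proof -
  define m where "m = nat \<lfloor>t\<rfloor>"
  have m: "real m \<le> t" "t < real m + 1"
    using assms unfolding m_def by linarith+
  have "poisson_weight t j \<le> poisson_weight t m"
    unfolding m_def using assms by (intro poisson_weight_le_mode) simp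
  also have "\<dots> \<le> 2 / sqrt t"
  proof (cases "m = 0")
    case True
    then have "sqrt t \<le> 2"
      using m real_sqrt_le_mono[of t 4] by simp
    moreover have "poisson_weight t m \<le> 1"
      using assms by (intro poisson_weight_le_1) simp
    ultimately have "poisson_weight t m * sqrt t \<le> 1 * 2"
      using assms poisson_weight_nonneg[of t m] by (intro mult_mono) simp_all
    then show ?thesis
      using assms by (simp add: le_divide_eq)
  next
    case False
    have "poisson_weight t m \<le> real m ^ m * exp (- real m) / fact m"
      unfolding poisson_weight_def
      using False assms by (intro divide_right_mono power_mult_exp_le) simp_all
    also have "\<dots> \<le> real m ^ m * exp (- real m) / (sqrt (real m) * real m ^ m * exp (- real m))"
      using False by (intro divide_left_mono stirling_le_fact) simp_all
    also have "\<dots> = 1 / sqrt (real m)"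
      using False by simp
    also have "\<dots> \<le> 2 / sqrt t"
    proof -
      have "sqrt t \<le> sqrt (4 * real m)"
        using m False by simp
      then show ?thesis
        using False assms by (simp add: real_sqrt_mult divide_simps)
    qed
    finally show ?thesis .
  qed
  finally show ?thesis .
qed

lemma poisson_weight_mode_ge:
  assumes "t \<ge> 0" shows "exp (-2) / sqrt (t + 1) \<le> poisson_weight t (nat \<lfloor>t\<rfloor>)"
proof -
  define m where "m = nat \<lfloor>t\<rfloor>"
  have m: "real m \<le> t" "t < real m + 1"
    using assms unfolding m_def by linarith+
  have "exp (-2) / sqrt (t + 1) \<le> poisson_weight t m"
  proof (cases "m = 0")
    case True
    have "exp (-2) / sqrt (t + 1) \<le> exp (-2)"
      using assms by (simp add: divide_le_eq)
    also have "\<dots> \<le> exp (- t)"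
      using True m by simp
    finally show ?thesis
      using True by (simp add: poisson_weight_def)
  next
    case False
    have "exp (-2) / sqrt (t + 1) \<le> exp (-2) / sqrt (real m)"
      using False m by (intro divide_left_mono) simp_all
    also have "\<dots> = real m ^ m * exp (- (real m + 1))
        / (exp 1 * sqrt (real m) * real m ^ m * exp (- real m))"
    proof -
      have "exp (- (real m + 1)) = exp (-2) * exp 1 * exp (- real m)"
        by (simp flip: exp_add)
      then show ?thesis
        using False by simp
    qed
    also have "\<dots> \<le> real m ^ m * exp (- (real m + 1)) / fact m"
      using False by (intro divide_left_mono fact_le_stirling) simp_all
    also have "\<dots> \<le> t ^ m * exp (- t) / fact m"
      using m assms by (intro divide_right_mono mult_mono power_mono) simp_all
    finally show ?thesis
      by (simp add: poisson_weight_def)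
  qed
  then show ?thesis
    unfolding m_def .
qed

definition skellam :: "real \<Rightarrow> real \<Rightarrow> nat \<Rightarrow> real" where
  "skellam a b v = (\<Sum>k. poisson_weight a (v + k) * poisson_weight b k)"

lemma summable_skellam:
  assumes "a \<ge> 0" "b \<ge> 0"
  shows "summable (\<lambda>k. poisson_weight a (v + k) * poisson_weight b k)"
proof (rule summable_comparison_test[OF _ summable_poisson_weight])
  show "\<exists>N. \<forall>k\<ge>N. norm (poisson_weight a (v + k) * poisson_weight b k) \<le> poisson_weight b k"
    using assms poisson_weight_le_1[of a] poisson_weight_nonneg
    by (auto intro!: mult_left_le_one_le)
qed

lemma skellam_le:
  assumes "a \<ge> 0" "b \<ge> 0" "\<And>j. poisson_weight a j \<le> c"
  shows "skellam a b v \<le> c"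
proof -
  have sums: "(\<lambda>k. c * poisson_weight b k) sums (c * 1)"
    by (rule sums_mult[OF poisson_weight_sums])
  have "skellam a b v \<le> (\<Sum>k. c * poisson_weight b k)"
    unfolding skellam_def
  proof (rule suminf_le)
    show "poisson_weight a (v + k) * poisson_weight b k \<le> c * poisson_weight b k" for k
      using assms by (intro mult_right_mono poisson_weight_nonneg)
  qed (use assms sums_summable[OF sums] in \<open>auto intro: summable_skellam\<close>)
  also have "\<dots> = c"
    using sums_unique[OF sums] by simp
  finally show ?thesis .
qed

lemma skellam_ge:
  assumes "b \<ge> 0" "a = b + real v"
  shows "exp (-4) / sqrt ((a + 1) * (b + 1)) \<le> skellam a b v"
proof -
  define k where "k = nat \<lfloor>b\<rfloor>"
  have mode: "v + k = nat \<lfloor>a\<rfloor>"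
    unfolding k_def assms(2) using assms(1) by (simp add: nat_add_distrib)
  have "exp (-4) / sqrt ((a + 1) * (b + 1)) = exp (-2) / sqrt (a + 1) * (exp (-2) / sqrt (b + 1))"
    by (simp add: real_sqrt_mult flip: exp_add)
  also have "\<dots> \<le> poisson_weight a (v + k) * poisson_weight b k"
  proof (rule mult_mono)
    show "exp (-2) / sqrt (a + 1) \<le> poisson_weight a (v + k)"
      unfolding mode using assms by (intro poisson_weight_mode_ge) simp
    show "exp (-2) / sqrt (b + 1) \<le> poisson_weight b k"
      unfolding k_def using assms by (intro poisson_weight_mode_ge)
  qed (use assms in \<open>simp_all add: poisson_weight_nonneg\<close>)
  also have "\<dots> \<le> skellam a b v"
    unfolding skellam_def using assms
    by (intro sum_le_suminf[of _ "{k}", simplified] summable_skellam)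
      (auto intro!: mult_nonneg_nonneg poisson_weight_nonneg)
  finally show ?thesis .
qed

lemma E_fun_sums_bessel_series:
  "(\<lambda>k. (lam / 2) ^ (v + 2 * k) / (fact k * fact (v + k))) sums E_fun v lam"
proof -
  define f where "f n = (if v \<le> n \<and> even (n - v)
      then lam ^ n / (2 ^ n * fact n) * real (n choose ((n - v) div 2)) else 0)" for n
  have "norm (f n) \<le> inverse (fact n) * \<bar>lam\<bar> ^ n" for n
  proof -
    have "norm (f n) \<le> \<bar>lam\<bar> ^ n / (2 ^ n * fact n) * real (n choose ((n - v) div 2))"
      by (simp add: f_def abs_mult power_abs)
    also have "\<dots> \<le> \<bar>lam\<bar> ^ n / (2 ^ n * fact n) * 2 ^ n"
      using binomial_le_pow2 of_nat_mono by (intro mult_left_mono) fastforce+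
    also have "\<dots> = inverse (fact n) * \<bar>lam\<bar> ^ n"
      by (simp add: field_simps)
    finally show ?thesis .
  qed
  then have "summable f"
    by (intro summable_comparison_test[OF _ summable_exp]) auto
  then have "f sums E_fun v lam"
    unfolding E_fun_def f_def by (simp add: summable_sums)
  moreover have "f (v + 2 * k) = (lam / 2) ^ (v + 2 * k) / (fact k * fact (v + k))" for k
  proof -
    have "real ((v + 2 * k) choose k) = fact (v + 2 * k) / (fact k * fact (v + k))"
      by (subst binomial_fact) (auto simp: algebra_simps)
    then show ?thesis
      by (simp add: f_def power_divide)
  qed
  moreover have "f n = 0" if "n \<notin> range (\<lambda>k. v + 2 * k)" for n
  proof -
    have "\<not> (v \<le> n \<and> even (n - v))"
    proof
      assume "v \<le> n \<and> even (n - v)"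
      then obtain k where "n = v + 2 * k"
        by (metis evenE le_add_diff_inverse)
      with that show False
        by auto
    qed
    then show ?thesis
      unfolding f_def by (rule if_not_P)
  qed
  ultimately show ?thesis
    by (subst (asm) sums_mono_reindex[symmetric, of "\<lambda>k. v + 2 * k"])
      (auto intro: strict_monoI)
qed

lemma bessel_term_eq_poisson_product:
  assumes "a \<noteq> 0" "a * b = (lam / 2) ^ 2"
  shows "(lam / 2) ^ (v + 2 * k) / (fact k * fact (v + k))
    = exp (a + b) * (lam / (2 * a)) ^ v * (poisson_weight a (v + k) * poisson_weight b k)"
proof -
  have "(lam / (2 * a)) ^ v * a ^ (v + k) * b ^ k = (lam / (2 * a) * a) ^ v * (a * b) ^ k"
    by (simp only: power_add power_mult_distrib ac_simps)
  also have "\<dots> = (lam / 2) ^ (v + 2 * k)"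
    using assms by (simp add: power_add power_mult flip: power2_eq_square)
  finally have "(lam / 2) ^ (v + 2 * k) = (lam / (2 * a)) ^ v * a ^ (v + k) * b ^ k" ..
  moreover have "exp (a + b) * (exp (- a) * exp (- b)) = 1"
    by (simp flip: exp_add)
  ultimately show ?thesis
    unfolding poisson_weight_def by (simp add: field_simps)
qed

lemma E_fun_eq_skellam:
  assumes "a > 0" "b \<ge> 0" "a * b = (lam / 2) ^ 2"
  shows "E_fun v lam = exp (a + b) * (lam / (2 * a)) ^ v * skellam a b v"
proof -
  have "(\<lambda>k. (lam / 2) ^ (v + 2 * k) / (fact k * fact (v + k)))
      = (\<lambda>k. exp (a + b) * (lam / (2 * a)) ^ v * (poisson_weight a (v + k) * poisson_weight b k))"
    using assms by (intro ext bessel_term_eq_poisson_product) simp_all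
  also have "\<dots> sums (exp (a + b) * (lam / (2 * a)) ^ v * skellam a b v)"
    unfolding skellam_def using assms by (intro sums_mult summable_sums summable_skellam) simp_all
  finally have "(\<lambda>k. (lam / 2) ^ (v + 2 * k) / (fact k * fact (v + k)))
      sums (exp (a + b) * (lam / (2 * a)) ^ v * skellam a b v)" .
  then show ?thesis
    using E_fun_sums_bessel_series sums_unique2 by blast
qed

lemma sqrt_sum_squares_bounds:
  fixes x y :: real
  assumes "x \<ge> 0" "y > 0"
  shows "x < sqrt (x ^ 2 + y ^ 2)" "y \<le> sqrt (x ^ 2 + y ^ 2)" "sqrt (x ^ 2 + y ^ 2) \<le> x + y"
proof -
  show "x < sqrt (x ^ 2 + y ^ 2)"
    using assms real_sqrt_less_mono[of "x ^ 2" "x ^ 2 + y ^ 2"] by simp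
  show "y \<le> sqrt (x ^ 2 + y ^ 2)"
    using assms real_sqrt_le_mono[of "y ^ 2" "x ^ 2 + y ^ 2"] by simp
  have "x ^ 2 + y ^ 2 \<le> (x + y) ^ 2"
    using assms by (simp add: power2_sum)
  then show "sqrt (x ^ 2 + y ^ 2) \<le> x + y"
    using assms real_sqrt_le_mono by fastforce
qed

lemma exp_Psi:
  fixes v :: nat and lam :: real
  defines "s \<equiv> sqrt (real v ^ 2 + lam ^ 2)"
  assumes "lam > 0"
  shows "exp (Psi v lam) = exp s * (lam / (s + real v)) ^ v"
proof -
  have "real v < s"
    unfolding s_def using assms by (intro sqrt_sum_squares_bounds) simp_all
  moreover have "s ^ 2 = real v ^ 2 + lam ^ 2"
    unfolding s_def by simp
  ultimately have "(s - real v) / lam = lam / (s + real v)"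
    using assms by (simp add: field_simps power2_eq_square)
  moreover have "lam / (s + real v) > 0"
    using assms \<open>real v < s\<close> by simp
  ultimately show ?thesis
    unfolding Psi_def s_def[symmetric] by (simp add: exp_add exp_of_nat_mult)
qed

lemma E_fun_eq_exp_Psi_skellam:
  fixes v :: nat and lam :: real
  defines "s \<equiv> sqrt (real v ^ 2 + lam ^ 2)"
  assumes "lam > 0"
  shows "E_fun v lam = exp (Psi v lam) * skellam ((s + real v) / 2) ((s - real v) / 2) v"
proof -
  have "real v < s"
    unfolding s_def using assms by (intro sqrt_sum_squares_bounds) simp_all
  moreover have "(s + real v) / 2 * ((s - real v) / 2) = (lam / 2) ^ 2"
    unfolding s_def by (simp add: field_simps power2_eq_square)
  ultimately have "E_fun v lam = exp ((s + real v) / 2 + (s - real v) / 2)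
      * (lam / (2 * ((s + real v) / 2))) ^ v * skellam ((s + real v) / 2) ((s - real v) / 2) v"
    by (intro E_fun_eq_skellam) simp_all
  also have "\<dots> = exp s * (lam / (s + real v)) ^ v * skellam ((s + real v) / 2) ((s - real v) / 2) v"
  proof -
    have "(s + real v) / 2 + (s - real v) / 2 = s" "2 * ((s + real v) / 2) = s + real v"
      by (simp_all add: field_simps)
    then show ?thesis
      by (simp only:)
  qed
  finally show ?thesis
    unfolding s_def exp_Psi[OF assms(2)] .
qed

lemma skellam_Psi_bounds:
  fixes v :: nat and lam :: real
  defines "s \<equiv> sqrt (real v ^ 2 + lam ^ 2)"
  assumes lam: "lam \<ge> 1/2"
  shows "exp (-4) / (5 * (real v + lam)) \<le> skellam ((s + real v) / 2) ((s - real v) / 2) v"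
    and "skellam ((s + real v) / 2) ((s - real v) / 2) v \<le> 1"
    and "skellam ((s + real v) / 2) ((s - real v) / 2) v \<le> 4 * lam powr (-1/2)"
proof -
  define a b where "a = (s + real v) / 2" and "b = (s - real v) / 2"
  have s: "real v < s" "lam \<le> s" "s \<le> real v + lam"
    unfolding s_def using lam by (intro sqrt_sum_squares_bounds; simp)+
  then have ab: "a > 0" "b > 0" "a = b + real v"
    unfolding a_def b_def by (simp_all add: field_simps)
  have "sqrt ((a + 1) * (b + 1)) \<le> ((a + 1) + (b + 1)) / 2"
    using ab by (intro arith_geo_mean_sqrt) simp_all
  also have "\<dots> \<le> 5 * (real v + lam)"
    unfolding a_def b_def using s lam by (simp add: field_simps)
  finally have "exp (-4) / (5 * (real v + lam)) \<le> exp (-4) / sqrt ((a + 1) * (b + 1))"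
    using ab lam by (intro divide_left_mono mult_pos_pos) simp_all
  also have "\<dots> \<le> skellam a b v"
    using ab by (intro skellam_ge) simp_all
  finally show "exp (-4) / (5 * (real v + lam)) \<le> skellam ((s + real v) / 2) ((s - real v) / 2) v"
    unfolding a_def b_def .
  show "skellam ((s + real v) / 2) ((s - real v) / 2) v \<le> 1"
    using ab unfolding a_def[symmetric] b_def[symmetric]
    by (intro skellam_le poisson_weight_le_1) simp_all
  have "skellam a b v \<le> 2 / sqrt a"
    using ab by (intro skellam_le poisson_weight_le_sqrt) simp_all
  also have "\<dots> \<le> 4 * lam powr (-1/2)"
  proof -
    have "sqrt lam \<le> sqrt (4 * a)"
      unfolding a_def using s by simp
    then have "sqrt lam \<le> 2 * sqrt a"
      by (simp add: real_sqrt_mult)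
    then have "2 / sqrt a \<le> 4 / sqrt lam"
      using ab(1) lam by (simp add: divide_simps)
    then show ?thesis
      using lam by (simp add: powr_minus_divide powr_half_sqrt)
  qed
  finally show "skellam ((s + real v) / 2) ((s - real v) / 2) v \<le> 4 * lam powr (-1/2)"
    unfolding a_def b_def .
qed

lemma E_fun_bounds:
  assumes "lam \<ge> 1/2"
  shows "exp (-4) / 5 * exp (Psi v lam) / (real v + lam) \<le> E_fun v lam"
    and "E_fun v lam \<le> exp (Psi v lam)"
    and "E_fun v lam \<le> 4 * lam powr (-1/2) * exp (Psi v lam)"
proof -
  let ?s = "sqrt (real v ^ 2 + lam ^ 2)"
  let ?S = "skellam ((?s + real v) / 2) ((?s - real v) / 2) v"
  have E: "E_fun v lam = exp (Psi v lam) * ?S"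
    using assms by (intro E_fun_eq_exp_Psi_skellam) simp
  note bounds = skellam_Psi_bounds[OF assms, of v]
  have "exp (-4) / 5 * exp (Psi v lam) / (real v + lam)
      = exp (Psi v lam) * (exp (-4) / (5 * (real v + lam)))"
    by simp
  also have "\<dots> \<le> E_fun v lam"
    unfolding E by (intro mult_left_mono bounds(1)) simp
  finally show "exp (-4) / 5 * exp (Psi v lam) / (real v + lam) \<le> E_fun v lam" .
  show "E_fun v lam \<le> exp (Psi v lam)"
    unfolding E by (intro mult_left_le bounds(2)) simp
  show "E_fun v lam \<le> 4 * lam powr (-1/2) * exp (Psi v lam)"
    unfolding E using bounds(3) by (simp add: mult.commute)
qed

theorem proposition4p2:
  shows "\<exists>C c :: real. C > 0 \<and> c > 0 \<and>
    (\<forall>(v::nat) (lam::real). lam \<ge> 1/2 \<longrightarrow>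
      (real v \<ge> lam \<longrightarrow>
         c * exp (Psi v lam) / (real v + lam) \<le> E_fun v lam \<and>
         E_fun v lam \<le> C * (real v + lam) * exp (Psi v lam)) \<and>
      (real v \<le> lam \<longrightarrow>
         c * exp (Psi v lam) / (real v + lam) \<le> E_fun v lam \<and>
         E_fun v lam \<le> C * lam powr (-1/2) * exp (Psi v lam)))"
proof -
  have "E_fun v lam \<le> 4 * (real v + lam) * exp (Psi v lam)"
    if "lam \<ge> 1/2" "real v \<ge> lam" for v :: nat and lam :: real
  proof -
    have "exp (Psi v lam) \<le> 4 * (real v + lam) * exp (Psi v lam)"
      using that by simp
    then show ?thesis
      by (rule order_trans[OF E_fun_bounds(2)[OF that(1)]])
  qed
  then show ?thesis
    using E_fun_bounds(1,3)
    by (intro exI[of _ 4] exI[of _ "exp (-4) / 5"]) auto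
qed

end
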